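(* Let $Q=(q_n)_{n\ge1}$ be a basic sequence that is infinite in limit, and let $F$ be a $Q$-special sequence. Then $x_F$ is $Q$-distribution normal, i.e. the sequence $\left(q_1q_2\cdots q_n x_F \bmod 1\right)_{n=0}^{\infty}$ is uniformly distributed in $[0,1)$.
   Context: A basic sequence is a sequence $Q=(q_n)_{n\ge1}$ of integers with $q_n\ge 2$; it is infinite in limit if $q_n\to\infty$. $\mathbb{N}$ denotes the positive integers. For each positive integer $j$ let $\nu_j=\min\{N : q_m\ge 2j^2 \text{ for all } m\ge N\}$. Define $l_1=\max(\nu_2-1,1)$ and, recursively for $i\ge 2$, $l_i=\max\big(\min\{k\in\mathbb{N} : l_1+2l_2+\cdots+(i-1)l_{i-1}+ik\ge \nu_{i+1}-1\},1\big)$. Put $L_i=\sum_{j=1}^i jl_j$ (with $L_0=0$). Let $S_Q=\{(a,b,c)\in\mathbb{N}^3 : b\le l_a,\ c\le a\}$ and $\phi_Q(a,b,c)=L_{a-1}+(b-1)a+c$; $\phi_Q$ is a bijection $S_Q\to\mathbb{N}$. A $Q$-special sequence is a family of integers $F=(F_{(a,b,c)})_{(a,b,c)\in S_Q}$ with $F_{(a,b,1)}=0$ for all $(a,b,1)\in S_Q$ and $\frac{F_{(a,b,c)}}{q_{\phi_Q(a,b,c)}}\in\left[\frac{c-1}{a}-\frac{1}{2a^2},\frac{c-1}{a}+\frac{1}{2a^2}\right]$ for $(a,b,c)\in S_Q$ with $c>1$. For such $F$ put $E_{F,n}=F_{\phi_Q^{-1}(n)}$ and $x_F=\sum_{n=1}^\infty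 \frac{E_{F,n}}{q_1q_2\cdots q_n}$. *)

theory Defs
  imports Complex_Main
begin

text \<open>Sequences are indexed from 1; the value at index 0 is irrelevant.\<close>

definition basic_sequence :: "(nat \<Rightarrow> nat) \<Rightarrow> bool" where
  "basic_sequence q \<longleftrightarrow> (\<forall>n\<ge>1. q n \<ge> 2)"

definition infinite_in_limit :: "(nat \<Rightarrow> nat) \<Rightarrow> bool" where
  "infinite_in_limit q \<longleftrightarrow> filterlim q at_top sequentially"

definition nu :: "(nat \<Rightarrow> nat) \<Rightarrow> nat \<Rightarrow> nat" where
  "nu q j = (LEAST N. N \<ge> 1 \<and> (\<forall>m\<ge>N. q m \<ge> 2 * j ^ 2))"

text \<open>lL q i = (l_i, L_i), computed simultaneously; lL q 0 = (0, L_0) = (0,0).\<close>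
primrec lL :: "(nat \<Rightarrow> nat) \<Rightarrow> nat \<Rightarrow> nat \<times> nat" where
  "lL q 0 = (0, 0)"
| "lL q (Suc i) =
     (let Lprev = snd (lL q i);
          l = (if i = 0 then max (nu q 2 - 1) 1
               else max (LEAST k. k \<ge> 1 \<and> Lprev + Suc i * k \<ge> nu q (Suc i + 1) - 1) 1)
      in (l, Lprev + Suc i * l))"

definition l_seq :: "(nat \<Rightarrow> nat) \<Rightarrow> nat \<Rightarrow> nat" where
  "l_seq q i = fst (lL q i)"

definition L_seq :: "(nat \<Rightarrow> nat) \<Rightarrow> nat \<Rightarrow> nat" where
  "L_seq q i = (\<Sum>j=1..i. j * l_seq q j)"

definition S_Q :: "(nat \<Rightarrow> nat) \<Rightarrow> (nat \<times> nat \<times> nat) set" where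
  "S_Q q = {(a, b, c). a \<ge> 1 \<and> b \<ge> 1 \<and> c \<ge> 1 \<and> b \<le> l_seq q a \<and> c \<le> a}"

definition phi_Q :: "(nat \<Rightarrow> nat) \<Rightarrow> nat \<times> nat \<times> nat \<Rightarrow> nat" where
  "phi_Q q abc = (case abc of (a, b, c) \<Rightarrow> L_seq q (a - 1) + (b - 1) * a + c)"

definition Q_special :: "(nat \<Rightarrow> nat) \<Rightarrow> (nat \<times> nat \<times> nat \<Rightarrow> int) \<Rightarrow> bool" where
  "Q_special q F \<longleftrightarrow>
     (\<forall>(a, b, c) \<in> S_Q q.
        (c = 1 \<longrightarrow> F (a, b, c) = 0) \<and>
        (c > 1 \<longrightarrow>
           real_of_int (F (a, b, c)) / real (q (phi_Q q (a, b, c)))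
             \<in> {(real c - 1) / real a - 1 / (2 * real a ^ 2) ..
                 (real c - 1) / real a + 1 / (2 * real a ^ 2)}))"

definition E_F :: "(nat \<Rightarrow> nat) \<Rightarrow> (nat \<times> nat \<times> nat \<Rightarrow> int) \<Rightarrow> nat \<Rightarrow> int" where
  "E_F q F n = F (the_inv_into (S_Q q) (phi_Q q) n)"

definition x_F :: "(nat \<Rightarrow> nat) \<Rightarrow> (nat \<times> nat \<times> nat \<Rightarrow> int) \<Rightarrow> real" where
  "x_F q F = (\<Sum>n. real_of_int (E_F q F (n + 1)) / (\<Prod>i=1..n+1. real (q i)))"

definition uniformly_distributed_mod1 :: "(nat \<Rightarrow> real) \<Rightarrow> bool" where
  "uniformly_distributed_mod1 s \<longleftrightarrow>
     (\<forall>a b. 0 \<le> a \<and> a < b \<and> b \<le> 1 \<longrightarrow>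
        (\<lambda>N. real (card {n. n < N \<and> a \<le> frac (s n) \<and> frac (s n) < b}) / real N)
          \<longlonglongrightarrow> b - a)"

definition Q_distribution_normal :: "(nat \<Rightarrow> nat) \<Rightarrow> real \<Rightarrow> bool" where
  "Q_distribution_normal q x \<longleftrightarrow>
     uniformly_distributed_mod1 (\<lambda>n. (\<Prod>i=1..n. real (q i)) * x)"

end

theory Submission
  imports Defs
begin

text \<open>
  Let tail n be the fractional part of q_1 \<dots> q_n x_F, i.e. the tail of the Cantor series after
  its n-th digit. If position n + 1 is the c-th entry of a block of length a in the enumeration
  \<phi>_Q, the Q-special condition fixes E_(n+1)/q_(n+1) to within 1/(2a^2) of (c - 1)/a, and
  q_(n+1) \<ge> 2a^2 makes the rest of the tail equally small; so a tail n is within 1/a of c - 1.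
  Along one block the points a tail n thus sit next to 0, 1, \<dots>, a - 1, and every interval
  [\<alpha>, \<beta>) receives a(\<beta> - \<alpha>) of them up to an error 3. Summing over the completed blocks,
  the discrepancy of the first N points is at most 3 \<Sum>_(p\<le>N) 1/a_p + a_N. This is o(N):
  the block lengths a_p tend to infinity (Cesaro), and a_N^2 < 3N.
\<close>

section \<open>Counting integers in intervals and Cesaro means\<close>

lemma nat_real_interval_eq: "{j::nat. x \<le> real j \<and> real j < y} = {nat \<lceil>x\<rceil>..<nat \<lceil>y\<rceil>}"
  by (auto simp: ceiling_le_iff less_ceiling_iff nat_le_iff le_nat_iff zless_nat_eq_int_zless)

lemma card_nat_real_interval:
  "card {j::nat. x \<le> real j \<and> real j < y} = nat \<lceil>y\<rceil> - nat \<lceil>x\<rceil>"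
  by (simp add: nat_real_interval_eq)

lemma card_nat_real_interval_le:
  assumes "x \<le> y"
  shows "real (card {j::nat. x \<le> real j \<and> real j < y}) \<le> y - x + 1"
proof -
  have "real (nat \<lceil>y\<rceil> - nat \<lceil>x\<rceil>) \<le> y - x + 1"
    using ceiling_correct[of y] ceiling_correct[of x] assms by linarith
  then show ?thesis by (simp add: card_nat_real_interval)
qed

lemma card_nat_real_interval_ge:
  assumes "0 \<le> x"
  shows "y - x - 1 \<le> real (card {j::nat. x \<le> real j \<and> real j < y})"
proof -
  have "y - x - 1 \<le> real (nat \<lceil>y\<rceil> - nat \<lceil>x\<rceil>)"
    using ceiling_correct[of y] ceiling_correct[of x] assms by linarith
  then show ?thesis by (simp add: card_nat_real_interval)
qed

lemma card_close_points_in_interval: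
  fixes t :: "nat \<Rightarrow> real" and a :: nat and \<alpha> \<beta> :: real
  assumes "0 < a" and "0 \<le> \<alpha>" and "\<alpha> \<le> \<beta>" and "\<beta> \<le> 1"
    and close: "\<And>j. j < a \<Longrightarrow> \<bar>a * t j - j\<bar> \<le> 1 / a"
  shows "\<bar>real (card {j. j < a \<and> \<alpha> \<le> t j \<and> t j < \<beta>}) - a * (\<beta> - \<alpha>)\<bar> \<le> 3"
proof -
  let ?S = "{j. j < a \<and> \<alpha> \<le> t j \<and> t j < \<beta>}"
  have a: "1 \<le> real a" using assms(1) by simp
  have inv_a: "0 \<le> 1 / real a" by simp
  have "?S \<subseteq> {j. a * \<alpha> - 1 / a \<le> real j \<and> real j < a * \<beta> + 1 / a}"
  proof safe
    fix j assume "j < a" "\<alpha> \<le> t j" "t j < \<beta>"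
    then have "a * \<alpha> \<le> a * t j" "a * t j < a * \<beta>"
      using a by (simp_all add: mult_left_mono)
    with close[OF \<open>j < a\<close>] show "a * \<alpha> - 1 / a \<le> real j" "real j < a * \<beta> + 1 / a"
      unfolding abs_le_iff by linarith+
  qed
  then have "real (card ?S) \<le> real (card {j. a * \<alpha> - 1 / a \<le> real j \<and> real j < a * \<beta> + 1 / a})"
    by (intro of_nat_mono card_mono) (simp_all add: nat_real_interval_eq)
  also have "\<dots> \<le> a * (\<beta> - \<alpha>) + 2 / a + 1"
  proof -
    have "a * \<alpha> \<le> a * \<beta>" using assms(3) by (simp add: mult_left_mono)
    then have "a * \<alpha> - 1 / a \<le> a * \<beta> + 1 / a" using inv_a by linarith
    from card_nat_real_interval_le[OF this] show ?thesis by (simp add: algebra_simps)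
  qed
  finally have upper: "real (card ?S) \<le> a * (\<beta> - \<alpha>) + 2 / a + 1" .
  have "{j. a * \<alpha> + 1 / a \<le> real j \<and> real j < a * \<beta> - 1 / a} \<subseteq> ?S"
  proof safe
    fix j assume j: "a * \<alpha> + 1 / a \<le> real j" "real j < a * \<beta> - 1 / a"
    have "a * \<beta> \<le> a" using assms(4) a by (simp add: mult_left_le)
    then have "real j < real a" using j inv_a by linarith
    then have "j < a" by simp
    then have "a * \<alpha> \<le> a * t j" "a * t j < a * \<beta>"
      using close[OF \<open>j < a\<close>] j unfolding abs_le_iff by linarith+
    then show "j < a" "\<alpha> \<le> t j" "t j < \<beta>"
      using \<open>j < a\<close> a by (simp_all add: mult_le_cancel_left_pos mult_less_cancel_left_pos)
  qed
  then have "real (card {j. a * \<alpha> + 1 / a \<le> real j \<and> real j < a * \<beta> - 1 / a}) \<le> real (card ?S)"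
    by (intro of_nat_mono card_mono) auto
  moreover have "a * (\<beta> - \<alpha>) - 2 / a - 1
      \<le> real (card {j. a * \<alpha> + 1 / a \<le> real j \<and> real j < a * \<beta> - 1 / a})"
    using card_nat_real_interval_ge[of "a * \<alpha> + 1 / a" "a * \<beta> - 1 / a"] assms(2) a
    by (simp add: algebra_simps)
  moreover have "2 / real a \<le> 2" using a by (simp add: divide_le_eq)
  ultimately show ?thesis using upper unfolding abs_le_iff by linarith
qed

lemma Cesaro_mean_tendsto_0:
  fixes u :: "nat \<Rightarrow> real"
  assumes "u \<longlonglongrightarrow> 0"
  shows "(\<lambda>N. (\<Sum>n<N. u n) / N) \<longlonglongrightarrow> 0"
proof (rule LIMSEQ_I)
  fix r :: real assume "0 < r"
  then obtain M where M: "\<And>n. M \<le> n \<Longrightarrow> \<bar>u n\<bar> < r / 2"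
    using LIMSEQ_D[OF assms, of "r / 2"] by auto
  define C where "C = (\<Sum>n<M. \<bar>u n\<bar>)"
  obtain K :: nat where K: "2 * C / r < K" using reals_Archimedean2 by blast
  show "\<exists>N0. \<forall>N\<ge>N0. norm ((\<Sum>n<N. u n) / N - 0) < r"
  proof (intro exI allI impI)
    fix N assume N: "max (Suc M) (Suc K) \<le> N"
    have "(\<Sum>n<N. u n) = (\<Sum>n<M. u n) + (\<Sum>n\<in>{M..<N}. u n)"
      using sum.atLeastLessThan_concat[of 0 M N u] N by (simp add: lessThan_atLeast0)
    then have "\<bar>\<Sum>n<N. u n\<bar> \<le> \<bar>\<Sum>n<M. u n\<bar> + \<bar>\<Sum>n\<in>{M..<N}. u n\<bar>"
      by (simp add: abs_triangle_ineq)
    also have "\<dots> \<le> C + (\<Sum>n\<in>{M..<N}. \<bar>u n\<bar>)"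
      unfolding C_def by (intro add_mono sum_abs)
    finally have split: "\<bar>\<Sum>n<N. u n\<bar> \<le> C + (\<Sum>n\<in>{M..<N}. \<bar>u n\<bar>)" .
    have "(\<Sum>n\<in>{M..<N}. \<bar>u n\<bar>) \<le> real (card {M..<N}) * (r / 2)"
      using M by (intro sum_bounded_above) (simp add: less_imp_le)
    also have "\<dots> \<le> real N * (r / 2)"
      using \<open>0 < r\<close> by (intro mult_right_mono) auto
    finally have "(\<Sum>n\<in>{M..<N}. \<bar>u n\<bar>) \<le> real N * (r / 2)" .
    moreover have "2 * C / r < real N" using K N by linarith
    then have "C < real N * (r / 2)" using \<open>0 < r\<close> by (simp add: field_simps)
    ultimately have "\<bar>\<Sum>n<N. u n\<bar> < real N * r" using split by linarith
    then show "norm ((\<Sum>n<N. u n) / N - 0) < r"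
      using N by (simp add: field_simps)
  qed
qed

lemma sum_of_bool_lessThan: "(\<Sum>n<(N :: nat). of_bool (P n)) = (of_nat (card {n. n < N \<and> P n}) :: 'a :: semiring_1)"
proof -
  have "(\<Sum>n<N. of_bool (P n)) = (of_nat (card ({..<N} \<inter> {n. P n})) :: 'a)"
    by (rule sum_of_bool_eq) simp_all
  also have "{..<N} \<inter> {n. P n} = {n. n < N \<and> P n}" by auto
  finally show ?thesis .
qed

section \<open>The enumeration \<open>\<phi>_Q\<close> and block coordinates\<close>

lemma pred_mult_add: "1 \<le> k \<Longrightarrow> (k - 1) * a + a = k * (a :: nat)"
  by (cases k) simp_all

lemma L_seq_0 [simp]: "L_seq q 0 = 0"
  by (simp add: L_seq_def)

lemma L_seq_Suc: "L_seq q (Suc i) = L_seq q i + Suc i * l_seq q (Suc i)"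
  by (simp add: L_seq_def)

lemma L_seq_pred: "1 \<le> a \<Longrightarrow> L_seq q a = L_seq q (a - 1) + a * l_seq q a"
  by (cases a) (simp_all add: L_seq_Suc)

lemma snd_lL_eq_L_seq: "snd (lL q i) = L_seq q i"
  by (induction i) (simp_all add: Let_def L_seq_Suc l_seq_def)

lemma l_seq_pos: "1 \<le> i \<Longrightarrow> 1 \<le> l_seq q i"
  by (cases i) (simp_all add: l_seq_def Let_def)

lemma L_seq_mono: "a \<le> b \<Longrightarrow> L_seq q a \<le> L_seq q b"
  unfolding L_seq_def by (rule sum_mono2) auto

lemma triangular_le_L_seq: "a * (a + 1) \<le> 2 * L_seq q a"
proof (induction a)
  case (Suc a)
  have "Suc a * 1 \<le> Suc a * l_seq q (Suc a)"
    using l_seq_pos[of "Suc a" q] by (intro mult_le_mono2) simp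
  with Suc show ?case by (simp add: L_seq_Suc)
qed simp

lemma nu_le_Suc_L_seq:
  assumes "1 \<le> i"
  shows "nu q (i + 1) \<le> L_seq q i + 1"
proof (cases "i = 1")
  case True
  then show ?thesis by (simp add: L_seq_def l_seq_def Let_def numeral_2_eq_2)
next
  case False
  then obtain j where i: "i = Suc j" and "j \<noteq> 0" using assms by (cases i) auto
  define K where "K = (LEAST k. 1 \<le> k \<and> nu q (i + 1) - 1 \<le> L_seq q j + i * k)"
  have "1 \<le> K \<and> nu q (i + 1) - 1 \<le> L_seq q j + i * K"
    unfolding K_def by (rule LeastI[of _ "nu q (i + 1) + 1"]) (simp add: i)
  moreover have "l_seq q i = max K 1"
    using \<open>j \<noteq> 0\<close> by (simp add: i l_seq_def Let_def snd_lL_eq_L_seq K_def)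
  ultimately show ?thesis by (simp add: i L_seq_Suc) linarith
qed

lemma phi_Q_bounds:
  assumes "(a, b, c) \<in> S_Q q"
  shows "L_seq q (a - 1) < phi_Q q (a, b, c)" and "phi_Q q (a, b, c) \<le> L_seq q a"
proof -
  from assms have "1 \<le> a" "1 \<le> c" "c \<le> a" "1 \<le> b" "b \<le> l_seq q a"
    by (auto simp: S_Q_def)
  then have "(b - 1) * a + c \<le> (l_seq q a - 1) * a + a"
    by (intro add_mono mult_right_mono) auto
  also have "\<dots> = a * l_seq q a"
    using pred_mult_add[OF l_seq_pos[OF \<open>1 \<le> a\<close>]] by (simp add: mult.commute)
  finally show "phi_Q q (a, b, c) \<le> L_seq q a"
    using L_seq_Suc[of q "a - 1"] \<open>1 \<le> a\<close> by (simp add: phi_Q_def)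
  show "L_seq q (a - 1) < phi_Q q (a, b, c)"
    using \<open>1 \<le> c\<close> by (simp add: phi_Q_def)
qed

lemma L_seq_interval_unique:
  assumes "L_seq q (a - 1) < p" "p \<le> L_seq q a" "L_seq q (a' - 1) < p" "p \<le> L_seq q a'"
  shows "a = a'"
proof (rule ccontr)
  assume "a \<noteq> a'"
  then consider "a + 1 \<le> a'" | "a' + 1 \<le> a" by linarith
  then show False
  proof cases
    case 1
    then have "L_seq q a \<le> L_seq q (a' - 1)" by (intro L_seq_mono) simp
    with assms(2,3) show False by simp
  next
    case 2
    then have "L_seq q a' \<le> L_seq q (a - 1)" by (intro L_seq_mono) simp
    with assms(1,4) show False by simp
  qed
qed

lemma bij_betw_phi_Q: "bij_betw (phi_Q q) (S_Q q) {1..}"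
proof (rule bij_betwI')
  fix x y assume x: "x \<in> S_Q q" and y: "y \<in> S_Q q"
  obtain a b c a' b' c' where xy: "x = (a, b, c)" "y = (a', b', c')" by (cases x, cases y) auto
  show "phi_Q q x = phi_Q q y \<longleftrightarrow> x = y"
  proof
    assume eq: "phi_Q q x = phi_Q q y"
    then have "a = a'"
      using phi_Q_bounds[of a b c q] phi_Q_bounds[of a' b' c' q] x y xy
      by (intro L_seq_interval_unique[of q a "phi_Q q x" a']) auto
    moreover have "1 \<le> c" "c \<le> a" "1 \<le> c'" "c' \<le> a'" "1 \<le> b" "1 \<le> b'"
      using x y xy by (auto simp: S_Q_def)
    moreover note eq
    ultimately have digits: "(b - 1) * a + (c - 1) = (b' - 1) * a + (c' - 1)"
      using xy by (simp add: phi_Q_def)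
    have "c - 1 < a" "c' - 1 < a"
      using \<open>c \<le> a\<close> \<open>c' \<le> a'\<close> \<open>a = a'\<close> \<open>1 \<le> c\<close> by auto
    then have "b - 1 = b' - 1" "c - 1 = c' - 1"
      using arg_cong[OF digits, of "\<lambda>n. n div a"] arg_cong[OF digits, of "\<lambda>n. n mod a"] by simp_all
    with xy \<open>a = a'\<close> \<open>1 \<le> c\<close> \<open>1 \<le> c'\<close> \<open>1 \<le> b\<close> \<open>1 \<le> b'\<close> show "x = y" by auto
  qed simp
next
  fix x assume "x \<in> S_Q q"
  then show "phi_Q q x \<in> {1..}" by (auto simp: S_Q_def phi_Q_def)
next
  fix p :: nat assume "p \<in> {1..}"
  have "p \<le> L_seq q p"
    using triangular_le_L_seq[of p q] by (cases p) auto
  define a where "a = (LEAST a. p \<le> L_seq q a)"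
  have pa: "p \<le> L_seq q a"
    unfolding a_def by (rule LeastI) fact
  have "1 \<le> a" using pa \<open>p \<in> {1..}\<close> by (cases a) auto
  then have pa': "L_seq q (a - 1) < p"
    unfolding a_def using not_less_Least[of "a - 1" "\<lambda>a. p \<le> L_seq q a"] a_def by simp
  define r where "r = p - L_seq q (a - 1) - 1"
  have "r < a * l_seq q a"
    using pa pa' L_seq_Suc[of q "a - 1"] \<open>1 \<le> a\<close> unfolding r_def by simp
  then have "r div a < l_seq q a"
    by (simp add: less_mult_imp_div_less mult.commute)
  then have "(a, r div a + 1, r mod a + 1) \<in> S_Q q"
    using \<open>1 \<le> a\<close> by (simp add: S_Q_def Suc_leI)
  moreover have "phi_Q q (a, r div a + 1, r mod a + 1) = p"
    using pa' unfolding phi_Q_def r_def by (simp add: mult.commute)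
  ultimately show "\<exists>x\<in>S_Q q. p = phi_Q q x" by metis
qed

text \<open>
  block_coords q p = \<phi>_Q^(-1) p = (a, b, c): position p is the c-th entry of the b-th of the
  l_a blocks of length a. For p = 0, outside the range of \<phi>_Q, the value is junk; hence the
  hypotheses 1 \<le> p below.
\<close>
definition block_coords :: "(nat \<Rightarrow> nat) \<Rightarrow> nat \<Rightarrow> nat \<times> nat \<times> nat" where
  "block_coords q = the_inv_into (S_Q q) (phi_Q q)"

definition block_size :: "(nat \<Rightarrow> nat) \<Rightarrow> nat \<Rightarrow> nat" where
  "block_size q p = fst (block_coords q p)"

definition block_index :: "(nat \<Rightarrow> nat) \<Rightarrow> nat \<Rightarrow> nat" where
  "block_index q p = fst (snd (block_coords q p))"

definition block_pos :: "(nat \<Rightarrow> nat) \<Rightarrow> nat \<Rightarrow> nat" where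
  "block_pos q p = snd (snd (block_coords q p))"

lemma E_F_eq: "E_F q F p = F (block_coords q p)"
  by (simp add: E_F_def block_coords_def)

lemma block_coords_eq: "block_coords q p = (block_size q p, block_index q p, block_pos q p)"
  by (simp add: block_size_def block_index_def block_pos_def)

lemma block_coords_eqI:
  assumes "(a, b, c) \<in> S_Q q" and "phi_Q q (a, b, c) = p"
  shows "block_size q p = a" "block_index q p = b" "block_pos q p = c"
proof -
  have "block_coords q p = (a, b, c)"
    using assms bij_betw_imp_inj_on[OF bij_betw_phi_Q]
    unfolding block_coords_def by (metis the_inv_into_f_f)
  then show "block_size q p = a" "block_index q p = b" "block_pos q p = c"
    by (simp_all add: block_size_def block_index_def block_pos_def)
qed

lemma
  assumes "1 \<le> p"
  shows block_coords_mem: "(block_size q p, block_index q p, block_pos q p) \<in> S_Q q"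
    and phi_Q_block_coords: "phi_Q q (block_size q p, block_index q p, block_pos q p) = p"
  using assms bij_betw_the_inv_into[OF bij_betw_phi_Q] f_the_inv_into_f_bij_betw[OF bij_betw_phi_Q]
  unfolding block_coords_eq[symmetric] block_coords_def by (auto simp: bij_betw_def)

lemma
  assumes "1 \<le> p"
  shows block_size_pos: "1 \<le> block_size q p"
    and block_pos_pos: "1 \<le> block_pos q p"
    and block_pos_le_size: "block_pos q p \<le> block_size q p"
    and block_index_pos: "1 \<le> block_index q p"
    and block_index_le: "block_index q p \<le> l_seq q (block_size q p)"
  using block_coords_mem[OF assms, of q] by (auto simp: S_Q_def)

lemma
  assumes "1 \<le> p"
  shows L_seq_block_size_pred_less: "L_seq q (block_size q p - 1) < p"
    and le_L_seq_block_size: "p \<le> L_seq q (block_size q p)"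
  using phi_Q_bounds[OF block_coords_mem[OF assms]] phi_Q_block_coords[OF assms] by simp_all

lemma block_pos_le: "1 \<le> p \<Longrightarrow> block_pos q p \<le> p"
  using phi_Q_block_coords[of p q] by (simp add: phi_Q_def)

lemma block_coords_one: "block_size q 1 = 1" "block_pos q 1 = 1"
proof -
  have "(1, 1, 1) \<in> S_Q q" using l_seq_pos[of 1 q] by (simp add: S_Q_def)
  moreover have "phi_Q q (1, 1, 1) = 1" by (simp add: phi_Q_def)
  ultimately show "block_size q 1 = 1" "block_pos q 1 = 1" by (rule block_coords_eqI)+
qed

lemma block_pos_Suc:
  assumes "1 \<le> N" and "1 < block_pos q (Suc N)"
  shows "block_size q N = block_size q (Suc N)" and "block_pos q N = block_pos q (Suc N) - 1"
proof -
  let ?a = "block_size q (Suc N)" and ?b = "block_index q (Suc N)" and ?c = "block_pos q (Suc N)"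
  have "(?a, ?b, ?c - 1) \<in> S_Q q"
    using block_coords_mem[of "Suc N" q] assms(2) by (auto simp: S_Q_def)
  moreover have "phi_Q q (?a, ?b, ?c - 1) = N"
    using phi_Q_block_coords[of "Suc N" q] assms(2) by (simp add: phi_Q_def)
  ultimately show "block_size q N = ?a" "block_pos q N = ?c - 1"
    by (rule block_coords_eqI)+
qed

lemma block_pos_eq_size_if_next_starts:
  assumes "1 \<le> N" and "block_pos q (Suc N) = 1"
  shows "block_pos q N = block_size q N"
proof -
  let ?a = "block_size q (Suc N)" and ?b = "block_index q (Suc N)"
  have phi: "L_seq q (?a - 1) + (?b - 1) * ?a + 1 = Suc N"
    using phi_Q_block_coords[of "Suc N" q] assms(2) by (simp add: phi_Q_def)
  have "1 \<le> ?a" "1 \<le> ?b" "?b \<le> l_seq q ?a"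
    using block_size_pos block_index_pos block_index_le by auto
  show ?thesis
  proof (cases "?b = 1")
    case False
    then have "(?a, ?b - 1, ?a) \<in> S_Q q"
      using \<open>1 \<le> ?a\<close> \<open>1 \<le> ?b\<close> \<open>?b \<le> l_seq q ?a\<close> by (auto simp: S_Q_def)
    moreover have "phi_Q q (?a, ?b - 1, ?a) = N"
      using phi pred_mult_add[of "?b - 1" ?a] False \<open>1 \<le> ?b\<close> by (simp add: phi_Q_def add.assoc)
    ultimately show ?thesis using block_coords_eqI by metis
  next
    case True
    obtain a' where a': "?a = Suc a'" using \<open>1 \<le> ?a\<close> by (cases ?a) auto
    have N: "N = L_seq q a'" using phi True a' by simp
    then have "1 \<le> a'" using assms(1) by (cases a') auto
    then have "(a', l_seq q a', a') \<in> S_Q q"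
      using l_seq_pos[of a' q] by (auto simp: S_Q_def)
    moreover have "phi_Q q (a', l_seq q a', a') = N"
      using N L_seq_pred[OF \<open>1 \<le> a'\<close>, of q] pred_mult_add[OF l_seq_pos[OF \<open>1 \<le> a'\<close>], of q a']
      by (simp add: phi_Q_def mult.commute add.assoc)
    ultimately show ?thesis using block_coords_eqI by metis
  qed
qed

lemma block_members:
  assumes "1 \<le> N" and "block_pos q N = block_size q N" and "j < block_size q N"
  shows "block_size q (N - block_size q N + Suc j) = block_size q N"
    and "block_pos q (N - block_size q N + Suc j) = Suc j"
proof -
  let ?a = "block_size q N" and ?b = "block_index q N"
  have "(?a, ?b, Suc j) \<in> S_Q q"
    using block_coords_mem[OF assms(1), of q] assms(3) by (auto simp: S_Q_def)
  moreover have "phi_Q q (?a, ?b, Suc j) = N - ?a + Suc j"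
    using phi_Q_block_coords[OF assms(1), of q] assms(2,3) by (auto simp: phi_Q_def)
  ultimately show "block_size q (N - ?a + Suc j) = ?a" "block_pos q (N - ?a + Suc j) = Suc j"
    by (rule block_coords_eqI)+
qed

lemma block_size_sq_less:
  assumes "1 \<le> p"
  shows "block_size q p ^ 2 < 3 * p"
proof -
  obtain a where a: "block_size q p = Suc a"
    using block_size_pos[OF assms, of q] by (cases "block_size q p") auto
  have tri: "a * (a + 1) \<le> 2 * L_seq q a" by (rule triangular_le_L_seq)
  have L: "L_seq q a < p" using L_seq_block_size_pred_less[OF assms, of q] a by simp
  have "2 * a \<le> a * (a + 1)" by (cases a) auto
  then have "a + 1 \<le> p" using tri L by linarith
  with tri L show ?thesis by (simp add: a power2_eq_square)
qed

lemma filterlim_block_size: "filterlim (block_size q) at_top sequentially"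
  unfolding filterlim_at_top eventually_sequentially
proof (intro allI exI impI)
  fix J p assume "Suc (L_seq q J) \<le> p"
  then have "L_seq q J < L_seq q (block_size q p)"
    using le_L_seq_block_size[of p q] by simp
  then show "J \<le> block_size q p"
    using L_seq_mono[of "block_size q p" J q] by linarith
qed

lemma nu_spec:
  assumes "infinite_in_limit q" and "nu q j \<le> m"
  shows "2 * j ^ 2 \<le> q m"
proof -
  have "\<forall>\<^sub>F m in sequentially. 2 * j ^ 2 \<le> q m"
    using assms(1) by (simp add: infinite_in_limit_def filterlim_at_top)
  then obtain N where "\<forall>m\<ge>N. 2 * j ^ 2 \<le> q m"
    by (auto simp: eventually_sequentially)
  then have "\<exists>N. 1 \<le> N \<and> (\<forall>m\<ge>N. 2 * j ^ 2 \<le> q m)"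
    by (intro exI[of _ "max N 1"]) auto
  then have "\<forall>m\<ge>nu q j. 2 * j ^ 2 \<le> q m"
    unfolding nu_def by (rule LeastI2_ex) auto
  with assms(2) show ?thesis by blast
qed

lemma nu_one_le: "basic_sequence q \<Longrightarrow> nu q 1 \<le> 1"
  unfolding nu_def by (rule Least_le) (auto simp: basic_sequence_def)

lemma two_block_size_sq_le:
  assumes "basic_sequence q" and "infinite_in_limit q" and "1 \<le> p"
  shows "2 * block_size q p ^ 2 \<le> q p"
proof (rule nu_spec[OF assms(2)])
  let ?a = "block_size q p"
  show "nu q ?a \<le> p"
  proof (cases "?a = 1")
    case True
    then show ?thesis using nu_one_le[OF assms(1)] assms(3) by simp
  next
    case False
    then obtain a where a: "?a = Suc a" and "1 \<le> a"
      using block_size_pos[OF assms(3), of q] by (cases ?a) auto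
    then have "nu q ?a \<le> L_seq q a + 1"
      using nu_le_Suc_L_seq[of a q] by simp
    then show ?thesis
      using L_seq_block_size_pred_less[OF assms(3), of q] a by simp
  qed
qed

section \<open>Cantor series with admissible digits\<close>

locale cantor_expansion =
  fixes q :: "nat \<Rightarrow> nat" and E :: "nat \<Rightarrow> int"
  assumes basic: "basic_sequence q"
    and digit_nonneg: "1 \<le> n \<Longrightarrow> 0 \<le> E n"
    and digit_less: "1 \<le> n \<Longrightarrow> E n < int (q n)"
begin

definition qprod :: "nat \<Rightarrow> real" where
  "qprod n = (\<Prod>i=1..n. real (q i))"

definition digit_term :: "nat \<Rightarrow> real" where
  "digit_term k = real_of_int (E (Suc k)) / qprod (Suc k)"

definition tail :: "nat \<Rightarrow> real" where
  "tail n = qprod n * (\<Sum>k. digit_term (k + n))"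

lemma q_ge_2: "1 \<le> n \<Longrightarrow> 2 \<le> real (q n)"
  using basic by (simp add: basic_sequence_def)

lemma qprod_0 [simp]: "qprod 0 = 1"
  by (simp add: qprod_def)

lemma qprod_Suc: "qprod (Suc n) = qprod n * real (q (Suc n))"
  by (simp add: qprod_def prod.cl_ivl_Suc)

lemma qprod_ge_power: "2 ^ n \<le> qprod n"
proof (induction n)
  case (Suc n)
  have "0 \<le> qprod n"
    using Suc.IH zero_le_power[of "2 :: real" n] by linarith
  with Suc.IH have "2 ^ n * 2 \<le> qprod n * real (q (Suc n))"
    using q_ge_2[of "Suc n"] by (intro mult_mono) auto
  then show ?case by (simp add: qprod_Suc mult.commute)
qed simp

lemma qprod_pos: "0 < qprod n"
  using qprod_ge_power[of n] by (smt (verit) zero_less_power)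

lemma inverse_qprod_tendsto_0: "(\<lambda>n. 1 / qprod n) \<longlonglongrightarrow> 0"
proof (rule tendsto_sandwich[of "\<lambda>_. 0" _ _ "\<lambda>n. (1 / 2) ^ n"])
  show "\<forall>\<^sub>F n in sequentially. 0 \<le> 1 / qprod n"
    using qprod_pos by (simp add: less_imp_le)
  show "\<forall>\<^sub>F n in sequentially. 1 / qprod n \<le> (1 / 2) ^ n"
    using qprod_ge_power qprod_pos by (simp add: power_one_over frac_le)
qed (simp_all add: LIMSEQ_power_zero)

lemma digit_term_nonneg: "0 \<le> digit_term k"
  using digit_nonneg[of "Suc k"] qprod_pos[of "Suc k"] by (simp add: digit_term_def)

lemma digit_term_le: "digit_term k \<le> 1 / qprod k - 1 / qprod (Suc k)"
proof -
  have "real_of_int (E (Suc k)) \<le> real (q (Suc k)) - 1"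
    using digit_less[of "Suc k"] by linarith
  then have "digit_term k \<le> (real (q (Suc k)) - 1) / (qprod k * real (q (Suc k)))"
    unfolding digit_term_def qprod_Suc using qprod_pos[of k] q_ge_2[of "Suc k"]
    by (intro divide_right_mono) auto
  also have "\<dots> = 1 / qprod k - 1 / qprod (Suc k)"
    using qprod_pos[of k] q_ge_2[of "Suc k"] by (simp add: qprod_Suc field_simps)
  finally show ?thesis .
qed

lemma inverse_qprod_telescope: "(\<lambda>i. 1 / qprod (i + n) - 1 / qprod (Suc i + n)) sums (1 / qprod n)"
  using telescope_sums'[OF LIMSEQ_ignore_initial_segment[OF inverse_qprod_tendsto_0, of n]]
  by simp

lemma summable_digit_term: "summable (\<lambda>k. digit_term (k + n))"
  using inverse_qprod_telescope[of n] digit_term_nonneg digit_term_le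
  by (intro summable_comparison_test'[OF sums_summable]) auto

lemma tail_nonneg: "0 \<le> tail n"
  unfolding tail_def using qprod_pos[of n] summable_digit_term digit_term_nonneg
  by (intro mult_nonneg_nonneg suminf_nonneg) (auto simp: less_imp_le)

lemma tail_le_1: "tail n \<le> 1"
proof -
  have "(\<Sum>k. digit_term (k + n)) \<le> 1 / qprod n"
    using summable_digit_term digit_term_le inverse_qprod_telescope[of n]
    by (intro suminf_le_const[of _ _] sums_le[OF _ summable_sums]) auto
  then show ?thesis
    unfolding tail_def using qprod_pos[of n] by (simp add: field_simps)
qed

lemma tail_eq: "tail n = (real_of_int (E (Suc n)) + tail (Suc n)) / real (q (Suc n))"
proof -
  have "(\<Sum>k. digit_term (k + n)) = digit_term n + (\<Sum>k. digit_term (k + Suc n))"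
    using suminf_split_head[OF summable_digit_term[of n]] by simp
  then show ?thesis
    unfolding tail_def using qprod_pos[of n] q_ge_2[of "Suc n"]
    by (simp add: digit_term_def qprod_Suc field_simps)
qed

lemma qprod_mult_sum_lessThan_Ints: "qprod n * (\<Sum>k<n. digit_term k) \<in> \<int>"
proof (induction n)
  case (Suc n)
  have "qprod (Suc n) * (\<Sum>k<Suc n. digit_term k)
      = real (q (Suc n)) * (qprod n * (\<Sum>k<n. digit_term k)) + real_of_int (E (Suc n))"
    using qprod_pos[of n] q_ge_2[of "Suc n"] by (simp add: digit_term_def qprod_Suc algebra_simps)
  with Suc show ?case by simp
qed simp

lemma frac_qprod_mult:
  assumes "tail n < 1"
  shows "frac (qprod n * (\<Sum>k. digit_term k)) = tail n"
proof -
  have "qprod n * (\<Sum>k. digit_term k) = qprod n * (\<Sum>k<n. digit_term k) + tail n"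
    using suminf_split_initial_segment[OF summable_digit_term[of 0], of n]
    by (simp add: tail_def algebra_simps)
  then show ?thesis
    using qprod_mult_sum_lessThan_Ints[of n] tail_nonneg[of n] assms
    by (simp add: frac_add_int_left frac_eq)
qed

end

section \<open>Expansions given by \<open>Q\<close>-special sequences\<close>

locale Q_special_expansion =
  fixes q :: "nat \<Rightarrow> nat" and F :: "nat \<times> nat \<times> nat \<Rightarrow> int"
  assumes basic: "basic_sequence q"
    and infinite: "infinite_in_limit q"
    and special: "Q_special q F"
begin

lemma digit_block_coords:
  assumes "1 \<le> p"
  shows digit_eq_0: "block_pos q p = 1 \<Longrightarrow> E_F q F p = 0"
    and digit_ratio_mem: "1 < block_pos q p \<Longrightarrow>
      real_of_int (E_F q F p) / real (q p) \<in>
        {(real (block_pos q p) - 1) / real (block_size q p) - 1 / (2 * real (block_size q p) ^ 2) ..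
         (real (block_pos q p) - 1) / real (block_size q p) + 1 / (2 * real (block_size q p) ^ 2)}"
  using bspec[OF special[unfolded Q_special_def] block_coords_mem[OF assms, of q]]
    phi_Q_block_coords[OF assms, of q]
  by (simp_all add: E_F_eq block_coords_eq)

lemma digit_ratio_approx:
  assumes "1 \<le> p"
  shows "\<bar>real_of_int (E_F q F p) / real (q p) - (real (block_pos q p) - 1) / real (block_size q p)\<bar>
    \<le> 1 / (2 * real (block_size q p) ^ 2)"
proof (cases "block_pos q p = 1")
  case True
  then show ?thesis using digit_eq_0[OF assms] by simp
next
  case False
  then have "1 < block_pos q p" using block_pos_pos[OF assms, of q] by simp
  then show ?thesis using digit_ratio_mem[OF assms] unfolding abs_le_iff by auto
qed

lemma
  assumes p: "1 \<le> p"
  shows E_F_nonneg: "0 \<le> E_F q F p" and E_F_less: "E_F q F p < int (q p)"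
proof -
  let ?a = "real (block_size q p)" and ?c = "real (block_pos q p)"
  let ?x = "real_of_int (E_F q F p) / real (q p)"
  have q_pos: "0 < real (q p)" using basic p by (auto simp: basic_sequence_def)
  have "0 \<le> ?x \<and> ?x < 1"
  proof (cases "block_pos q p = 1")
    case True
    then show ?thesis using digit_eq_0[OF p] by simp
  next
    case False
    then have "2 \<le> ?c" "?c \<le> ?a"
      using block_pos_pos[OF p, of q] block_pos_le_size[OF p, of q] by simp_all
    moreover have "1 / (2 * ?a ^ 2) < 1 / ?a"
      using \<open>2 \<le> ?c\<close> \<open>?c \<le> ?a\<close> by (simp add: field_simps power2_eq_square)
    moreover have "1 / ?a \<le> (?c - 1) / ?a" "(?c - 1) / ?a \<le> 1 - 1 / ?a"
      using \<open>2 \<le> ?c\<close> \<open>?c \<le> ?a\<close> by (simp_all add: field_simps)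
    ultimately show ?thesis
      using digit_ratio_approx[OF p] unfolding abs_le_iff by linarith
  qed
  then show "0 \<le> E_F q F p" "E_F q F p < int (q p)"
    using q_pos by (simp_all add: zero_le_divide_iff divide_less_eq)
qed

sublocale cantor_expansion q "E_F q F"
  using basic E_F_nonneg E_F_less by unfold_locales

lemma x_F_eq_suminf: "x_F q F = (\<Sum>k. digit_term k)"
  by (simp add: x_F_def digit_term_def qprod_def)

lemma tail_approx:
  "\<bar>tail n - (real (block_pos q (Suc n)) - 1) / real (block_size q (Suc n))\<bar>
    \<le> 1 / real (block_size q (Suc n)) ^ 2"
proof -
  let ?a = "real (block_size q (Suc n))" and ?q = "real (q (Suc n))"
  have "2 * ?a ^ 2 \<le> ?q"
    using two_block_size_sq_le[OF basic infinite, of "Suc n"] by (simp flip: of_nat_power)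
  moreover have "1 \<le> ?a" using block_size_pos[of "Suc n" q] by simp
  ultimately have "tail (Suc n) / ?q \<le> 1 / (2 * ?a ^ 2)"
    using tail_le_1[of "Suc n"] tail_nonneg[of "Suc n"] by (simp add: frac_le)
  moreover have "0 \<le> tail (Suc n) / ?q" using tail_nonneg[of "Suc n"] by simp
  moreover have "tail n = real_of_int (E_F q F (Suc n)) / ?q + tail (Suc n) / ?q"
    using tail_eq[of n] by (simp add: add_divide_distrib)
  moreover have "1 / (2 * ?a ^ 2) + 1 / (2 * ?a ^ 2) = 1 / ?a ^ 2" by simp
  ultimately show ?thesis
    using digit_ratio_approx[of "Suc n"] unfolding abs_le_iff by linarith
qed

lemma tail_less_1: "tail n < 1"
proof (cases "block_pos q (Suc n) = 1")
  case True
  then have "tail n = tail (Suc n) / real (q (Suc n))"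
    using tail_eq[of n] digit_eq_0[of "Suc n"] by simp
  also have "\<dots> \<le> 1 / real (q (Suc n))"
    using tail_le_1[of "Suc n"] q_ge_2[of "Suc n"] by (intro divide_right_mono) auto
  also have "\<dots> < 1"
    using q_ge_2[of "Suc n"] by simp
  finally show ?thesis .
next
  case False
  let ?a = "real (block_size q (Suc n))" and ?c = "real (block_pos q (Suc n))"
  have "2 \<le> ?c" "?c \<le> ?a"
    using False block_pos_pos[of "Suc n" q] block_pos_le_size[of "Suc n" q] by simp_all
  then have "(?c - 1) / ?a \<le> (?a - 1) / ?a"
    by (intro divide_right_mono) auto
  also have "\<dots> = 1 - 1 / ?a"
    using \<open>2 \<le> ?c\<close> \<open>?c \<le> ?a\<close> by (simp add: diff_divide_distrib)
  finally have "(?c - 1) / ?a \<le> 1 - 1 / ?a" .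
  moreover have "?a * 1 < ?a * ?a"
    using \<open>2 \<le> ?c\<close> \<open>?c \<le> ?a\<close> by (intro mult_strict_left_mono) auto
  then have "1 / ?a ^ 2 < 1 / ?a"
    using \<open>2 \<le> ?c\<close> \<open>?c \<le> ?a\<close> by (intro divide_strict_left_mono) (auto simp: power2_eq_square)
  ultimately show ?thesis using tail_approx[of n] unfolding abs_le_iff by linarith
qed

lemma frac_prod_mult_x_F: "frac ((\<Prod>i=1..n. real (q i)) * x_F q F) = tail n"
  using frac_qprod_mult[OF tail_less_1] by (simp add: x_F_eq_suminf qprod_def)

lemma block_size_mult_tail_approx:
  "\<bar>real (block_size q (Suc n)) * tail n - (real (block_pos q (Suc n)) - 1)\<bar>
    \<le> 1 / real (block_size q (Suc n))"
proof -
  let ?a = "real (block_size q (Suc n))" and ?c = "real (block_pos q (Suc n))"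
  have "0 < ?a" using block_size_pos[of "Suc n" q] by simp
  have "?a * tail n - (?c - 1) = ?a * (tail n - (?c - 1) / ?a)"
    using \<open>0 < ?a\<close> by (simp add: field_simps)
  then have "\<bar>?a * tail n - (?c - 1)\<bar> = ?a * \<bar>tail n - (?c - 1) / ?a\<bar>"
    using \<open>0 < ?a\<close> by (simp add: abs_mult)
  also have "\<dots> \<le> ?a * (1 / ?a ^ 2)"
    using tail_approx[of n] \<open>0 < ?a\<close> by (intro mult_left_mono) auto
  also have "\<dots> = 1 / ?a" by (simp add: power2_eq_square)
  finally show ?thesis .
qed

section \<open>Discrepancy of the fractional parts\<close>

definition inverse_block_size_sum :: "nat \<Rightarrow> real" where
  "inverse_block_size_sum N = (\<Sum>n<N. 1 / real (block_size q (Suc n)))"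

lemma inverse_block_size_sum_over_N_tendsto_0:
  "(\<lambda>N. inverse_block_size_sum N / N) \<longlonglongrightarrow> 0"
proof -
  have "filterlim (\<lambda>n. real (block_size q (Suc n))) at_top sequentially"
    using filterlim_block_size[of q]
    by (intro filterlim_compose[OF filterlim_real_sequentially]) (simp add: filterlim_sequentially_Suc)
  then have "(\<lambda>n. 1 / real (block_size q (Suc n))) \<longlonglongrightarrow> 0"
    using tendsto_inverse_0_at_top by (simp add: inverse_eq_divide)
  then show ?thesis
    unfolding inverse_block_size_sum_def by (rule Cesaro_mean_tendsto_0)
qed

lemma block_size_over_N_tendsto_0: "(\<lambda>N. real (block_size q N) / N) \<longlonglongrightarrow> 0"
proof (rule tendsto_sandwich[of "\<lambda>_. 0" _ _ "\<lambda>N. sqrt (3 / real N)"])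
  show "\<forall>\<^sub>F N in sequentially. real (block_size q N) / N \<le> sqrt (3 / real N)"
    unfolding eventually_sequentially
  proof (intro exI allI impI)
    fix N :: nat assume "1 \<le> N"
    then have "real (block_size q N) ^ 2 < 3 * real N"
      using block_size_sq_less[of N q] by (simp flip: of_nat_power)
    then have "(real (block_size q N) / N) ^ 2 \<le> 3 / real N"
      using \<open>1 \<le> N\<close> by (simp add: power_divide field_simps power2_eq_square)
    then show "real (block_size q N) / N \<le> sqrt (3 / real N)"
      by (simp add: real_le_rsqrt)
  qed
  show "(\<lambda>N. sqrt (3 / real N)) \<longlonglongrightarrow> 0"
    using tendsto_real_sqrt[OF lim_const_over_n[of "3 :: real"]] by simp
qed auto

context
  fixes \<alpha> \<beta> :: real
  assumes interval: "0 \<le> \<alpha>" "\<alpha> \<le> \<beta>" "\<beta> \<le> 1"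
begin

definition deviation :: "nat \<Rightarrow> real" where
  "deviation n = of_bool (\<alpha> \<le> tail n \<and> tail n < \<beta>) - (\<beta> - \<alpha>)"

definition discrepancy :: "nat \<Rightarrow> real" where
  "discrepancy N = (\<Sum>n<N. deviation n)"

definition current_block_discrepancy :: "nat \<Rightarrow> real" where
  "current_block_discrepancy N = (\<Sum>n\<in>{N - block_pos q N..<N}. deviation n)"

lemma abs_deviation_le: "\<bar>deviation n\<bar> \<le> 1"
  using interval by (simp add: deviation_def abs_le_iff)

lemma complete_block_discrepancy:
  assumes "1 \<le> N" and "block_pos q N = block_size q N"
  shows "\<bar>current_block_discrepancy N\<bar> \<le> 3"
proof -
  let ?a = "block_size q N"
  have "?a \<le> N" using block_pos_le[OF assms(1), of q] assms(2) by simp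
  have close: "\<bar>real ?a * tail (N - ?a + j) - real j\<bar> \<le> 1 / real ?a" if "j < ?a" for j
    using block_size_mult_tail_approx[of "N - ?a + j"] block_members[OF assms that] by simp
  have "current_block_discrepancy N = (\<Sum>j<?a. deviation (N - ?a + j))"
    unfolding current_block_discrepancy_def assms(2)
    by (simp add: sum.atLeastLessThan_shift_0[of _ "N - ?a"] \<open>?a \<le> N\<close> lessThan_atLeast0)
  also have "\<dots> = real (card {j. j < ?a \<and> \<alpha> \<le> tail (N - ?a + j) \<and> tail (N - ?a + j) < \<beta>})
      - real ?a * (\<beta> - \<alpha>)"
    unfolding deviation_def sum_subtractf sum_of_bool_lessThan by (simp add: algebra_simps)
  finally show ?thesis
    using card_close_points_in_interval[OF _ interval close] block_size_pos[OF assms(1), of q]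
    by simp
qed

lemma abs_current_block_discrepancy_le:
  assumes "1 \<le> N"
  shows "\<bar>current_block_discrepancy N\<bar> \<le> block_pos q N"
proof -
  have "\<bar>current_block_discrepancy N\<bar> \<le> (\<Sum>n\<in>{N - block_pos q N..<N}. \<bar>deviation n\<bar>)"
    unfolding current_block_discrepancy_def by (rule sum_abs)
  also have "\<dots> \<le> real (card {N - block_pos q N..<N}) * 1"
    using abs_deviation_le by (intro sum_bounded_above) auto
  finally show ?thesis using block_pos_le[OF assms, of q] by simp
qed

lemma discrepancy_Suc: "discrepancy (Suc N) = discrepancy N + deviation N"
  by (simp add: discrepancy_def)

text \<open>
  inverse_block_size_sum N - block_pos q N / block_size q N is the number of blocks completed
  before the current one, and each of them contributes a discrepancy of at most 3.
\<close>
lemma discrepancy_current_block: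
  assumes "1 \<le> N"
  shows "\<bar>discrepancy N - current_block_discrepancy N\<bar>
    \<le> 3 * (inverse_block_size_sum N - block_pos q N / block_size q N)"
  using assms
proof (induction N rule: nat_induct_at_least)
  case base
  then show ?case
    by (simp add: discrepancy_def current_block_discrepancy_def inverse_block_size_sum_def
        block_coords_one[unfolded One_nat_def])
next
  case (Suc N)
  let ?a = "real (block_size q (Suc N))" and ?c = "block_pos q (Suc N)"
  have inv: "inverse_block_size_sum (Suc N) = inverse_block_size_sum N + 1 / ?a"
    by (simp add: inverse_block_size_sum_def)
  show ?case
  proof (cases "?c = 1")
    case True
    then have "current_block_discrepancy (Suc N) = deviation N"
      by (simp add: current_block_discrepancy_def)
    moreover have "block_pos q N = block_size q N"
      using block_pos_eq_size_if_next_starts[OF Suc.hyps True] .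
    then have "\<bar>discrepancy N\<bar> \<le> 3 * inverse_block_size_sum N"
      using Suc.IH complete_block_discrepancy[OF Suc.hyps] block_size_pos[OF Suc.hyps, of q]
      by simp
    ultimately show ?thesis
      using True by (simp add: discrepancy_Suc inv)
  next
    case False
    then have "1 < ?c" using block_pos_pos[of "Suc N" q] by simp
    note prev = block_pos_Suc[OF Suc.hyps this]
    have "{Suc N - ?c..<Suc N} = insert N {N - block_pos q N..<N}"
      using prev(2) block_pos_le[OF Suc.hyps, of q] \<open>1 < ?c\<close> by auto
    then have "current_block_discrepancy (Suc N) = current_block_discrepancy N + deviation N"
      by (simp add: current_block_discrepancy_def)
    moreover have "real (block_pos q N) / block_size q N = (real ?c - 1) / ?a"
      using prev \<open>1 < ?c\<close> by (simp add: of_nat_diff)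
    ultimately show ?thesis
      using Suc.IH by (simp add: discrepancy_Suc inv diff_divide_distrib)
  qed
qed

lemma abs_discrepancy_le:
  assumes "1 \<le> N"
  shows "\<bar>discrepancy N\<bar> \<le> 3 * inverse_block_size_sum N + block_size q N"
proof -
  have "\<bar>discrepancy N\<bar>
      \<le> \<bar>discrepancy N - current_block_discrepancy N\<bar> + \<bar>current_block_discrepancy N\<bar>"
    using abs_triangle_ineq[of "discrepancy N - current_block_discrepancy N"] by simp
  moreover have "0 \<le> real (block_pos q N) / block_size q N" by simp
  moreover have "real (block_pos q N) \<le> block_size q N" using block_pos_le_size[OF assms] by simp
  moreover have "\<bar>discrepancy N - current_block_discrepancy N\<bar>
      \<le> 3 * inverse_block_size_sum N - 3 * (real (block_pos q N) / block_size q N)"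
    using discrepancy_current_block[OF assms] by (simp add: right_diff_distrib)
  ultimately show ?thesis
    using abs_current_block_discrepancy_le[OF assms] by linarith
qed

lemma discrepancy_over_N_tendsto_0: "(\<lambda>N. discrepancy N / N) \<longlonglongrightarrow> 0"
proof -
  let ?bound = "\<lambda>N. 3 * (inverse_block_size_sum N / N) + real (block_size q N) / N"
  have bound: "\<bar>discrepancy N / N\<bar> \<le> ?bound N" if "1 \<le> N" for N
  proof -
    have "\<bar>discrepancy N / N\<bar> = \<bar>discrepancy N\<bar> / N" by simp
    also have "\<dots> \<le> (3 * inverse_block_size_sum N + block_size q N) / N"
      using abs_discrepancy_le[OF that] by (intro divide_right_mono) auto
    also have "\<dots> = ?bound N"
      by (simp add: add_divide_distrib)
    finally show ?thesis .
  qed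
  have "(\<lambda>N. \<bar>discrepancy N / N\<bar>) \<longlonglongrightarrow> 0"
  proof (rule tendsto_sandwich[of "\<lambda>_. 0" _ _ ?bound])
    show "\<forall>\<^sub>F N in sequentially. 0 \<le> \<bar>discrepancy N / N\<bar>" by simp
    show "\<forall>\<^sub>F N in sequentially. \<bar>discrepancy N / N\<bar> \<le> ?bound N"
      unfolding eventually_sequentially using bound by blast
    show "?bound \<longlonglongrightarrow> 0"
      using tendsto_add[OF tendsto_mult_right_zero[OF inverse_block_size_sum_over_N_tendsto_0]
          block_size_over_N_tendsto_0, of 3]
      by simp
  qed simp
  then show ?thesis by (simp only: tendsto_rabs_zero_iff)
qed

lemma card_frac_in_interval:
  "real (card {n. n < N \<and> \<alpha> \<le> frac ((\<Prod>i=1..n. real (q i)) * x_F q F)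
      \<and> frac ((\<Prod>i=1..n. real (q i)) * x_F q F) < \<beta>})
    = discrepancy N + N * (\<beta> - \<alpha>)"
  unfolding frac_prod_mult_x_F discrepancy_def deviation_def sum_subtractf sum_of_bool_lessThan
  by (simp add: algebra_simps)

lemma frac_in_interval_frequency_tendsto:
  "(\<lambda>N. real (card {n. n < N \<and> \<alpha> \<le> frac ((\<Prod>i=1..n. real (q i)) * x_F q F)
      \<and> frac ((\<Prod>i=1..n. real (q i)) * x_F q F) < \<beta>}) / N) \<longlonglongrightarrow> \<beta> - \<alpha>"
proof (rule Lim_transform_eventually)
  show "(\<lambda>N. discrepancy N / N + (\<beta> - \<alpha>)) \<longlonglongrightarrow> \<beta> - \<alpha>"
    using tendsto_add[OF discrepancy_over_N_tendsto_0 tendsto_const] by simp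
  show "\<forall>\<^sub>F N in sequentially. discrepancy N / N + (\<beta> - \<alpha>) = real (card {n. n < N \<and>
      \<alpha> \<le> frac ((\<Prod>i=1..n. real (q i)) * x_F q F) \<and> frac ((\<Prod>i=1..n. real (q i)) * x_F q F) < \<beta>}) / N"
    unfolding card_frac_in_interval eventually_sequentially
    by (intro exI[of _ 1] allI impI) (simp add: field_simps)
qed

end

end

theorem mainTheorem1:
  fixes q :: "nat \<Rightarrow> nat" and F :: "nat \<times> nat \<times> nat \<Rightarrow> int"
  assumes "basic_sequence q" and "infinite_in_limit q" and "Q_special q F"
  shows "Q_distribution_normal q (x_F q F)"
proof -
  interpret Q_special_expansion q F
    using assms by unfold_locales
  show ?thesis
    unfolding Q_distribution_normal_def uniformly_distributed_mod1_def
    by (intro allI impI frac_in_interval_frequency_tendsto) auto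
qed

end
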